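(* Let $d \geq 0$ be an integer and $t>0$. Let $M$ be a symmetric, unimodal, integer-valued random variable. Then $$\mathbb{E}\left[\log\frac{I_M(t)}{I_{M-d}(t)}\right] \leq \frac{d+d^2}{2t}.$$
   Context: $I_n(t)$ denotes the modified Bessel function of the first kind of integer order $n$ evaluated at $t$ (so $I_{-n}=I_n$). An integer-valued random variable $M$ is symmetric if $\mathbb{P}(M=m)=\mathbb{P}(M=-m)$ for all $m$, and (for symmetric laws) unimodal means that $m \mapsto \mathbb{P}(M=m)$ is non-increasing in $|m|$. *)

theory Defs
  imports "HOL-Probability.Probability"
begin

text \<open>Modified Bessel function of the first kind of integer order n, via its
power series; for negative n we use I_{-n} = I_n.\<close>
definition besselI :: "int \<Rightarrow> real \<Rightarrow> real" where
  "besselI n t = (\<Sum>k. (t / 2) ^ (2 * k + nat \<bar>n\<bar>) / (fact k * fact (k + nat \<bar>n\<bar>)))"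

definition symmetric_pmf :: "int pmf \<Rightarrow> bool" where
  "symmetric_pmf p \<longleftrightarrow> (\<forall>m. pmf p m = pmf p (- m))"

definition unimodal_sym_pmf :: "int pmf \<Rightarrow> bool" where
  "unimodal_sym_pmf p \<longleftrightarrow> (\<forall>m m'. \<bar>m\<bar> \<le> \<bar>m'\<bar> \<longrightarrow> pmf p m' \<le> pmf p m)"

end

theory Submission
  imports Defs
begin

text \<open>
  Write \<open>I n\<close> for \<open>besselI n t\<close>. The recurrence \<open>I n - I (n+2) = 2(n+1)/t * I (n+1)\<close>
  and Turan's inequality \<open>I n * I (n+2) \<le> I (n+1)\<^sup>2\<close> (compare the Cauchy products of the
  power series coefficientwise, using Vandermonde's identity) give
  \<open>ln (I n) - ln (I (n+1)) \<le> (n+1)/t\<close>. Hence \<open>ln (I m) + (m\<^sup>2 + |m|)/(2t)\<close> is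
  nondecreasing in \<open>|m|\<close>, so shifting a symmetric window \<open>[-n, n]\<close> by \<open>d\<close> can only
  increase its sum; what remains is the quadratic part, and every window sum of
  \<open>ln (I m / I (m-d))\<close> is at most \<open>(2n+1)(d+d\<^sup>2)/(2t)\<close>. For a symmetric unimodal law,
  Abel summation writes a truncated expectation as a combination of these window averages
  with total weight at most one, and dominated convergence passes to the limit.
\<close>

definition bessel_term :: "nat \<Rightarrow> real \<Rightarrow> nat \<Rightarrow> real" where
  "bessel_term n t k = (t / 2) ^ (2 * k + n) / (fact k * fact (k + n))"

lemma besselI_of_nat: "besselI (int n) t = (\<Sum>k. bessel_term n t k)"
  by (simp add: besselI_def bessel_term_def)

lemma besselI_nat_abs: "besselI (int (nat \<bar>m\<bar>)) t = besselI m t"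
  by (simp add: besselI_def)

lemma summable_norm_bessel_term: "summable (\<lambda>k. norm (bessel_term n t k))"
proof -
  let ?g = "\<lambda>k. \<bar>t / 2\<bar> ^ n * ((t / 2)\<^sup>2 ^ k / fact k)"
  have "norm (bessel_term n t k) \<le> ?g k" for k
  proof -
    have "\<bar>(t / 2) ^ (2 * k + n)\<bar> = \<bar>t / 2\<bar> ^ n * (t / 2)\<^sup>2 ^ k"
      unfolding power_add power_mult abs_mult power_abs power2_abs by (rule mult.commute)
    then have "norm (bessel_term n t k) = \<bar>t / 2\<bar> ^ n * ((t / 2)\<^sup>2 ^ k / (fact k * fact (k + n)))"
      by (simp add: bessel_term_def)
    also have "\<dots> \<le> ?g k"
      by (intro mult_left_mono divide_left_mono) (auto simp: fact_ge_1)
    finally show ?thesis .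
  qed
  moreover have "summable (\<lambda>k. (t / 2)\<^sup>2 ^ k / fact k)"
    unfolding divide_inverse_commute by (rule summable_exp)
  then have "summable ?g"
    by (rule summable_mult)
  ultimately show ?thesis
    by (intro summable_norm_comparison_test) auto
qed

lemma summable_bessel_term: "summable (bessel_term n t)"
  using summable_norm_cancel [OF summable_norm_bessel_term] .

lemma besselI_pos:
  assumes "t > 0"
  shows "besselI m t > 0"
proof -
  have "0 < (\<Sum>k. bessel_term (nat \<bar>m\<bar>) t k)"
    using assms by (intro suminf_pos summable_bessel_term) (simp add: bessel_term_def)
  then show ?thesis
    by (simp only: besselI_of_nat [symmetric] besselI_nat_abs)
qed

lemma bessel_term_recurrence:
  assumes "t \<noteq> 0"
  shows "bessel_term n t k = 2 * (real n + 1) / t * bessel_term (n + 1) t k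
           + (case k of 0 \<Rightarrow> 0 | Suc j \<Rightarrow> bessel_term (n + 2) t j)"
proof -
  define P where "P = (t / 2) ^ (2 * k + n)"
  define F :: real where "F = fact k * fact (k + n + 1)"
  have F: "F > 0"
    by (simp add: F_def)
  have "bessel_term n t k = P * (real k + real n + 1) / F"
  proof -
    have "F = fact k * fact (k + n) * (real k + real n + 1)"
      by (simp add: F_def algebra_simps)
    then show ?thesis
      by (simp add: bessel_term_def P_def)
  qed
  moreover have "2 * (real n + 1) / t * bessel_term (n + 1) t k = P * (real n + 1) / F"
  proof -
    have "bessel_term (n + 1) t k = P * (t / 2) / F"
      by (simp add: bessel_term_def P_def F_def)
    then show ?thesis
      using assms F by (simp add: field_simps)
  qed
  moreover have "(case k of 0 \<Rightarrow> 0 | Suc j \<Rightarrow> bessel_term (n + 2) t j) = P * real k / F"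
  proof (cases k)
    case (Suc j)
    then have "(t / 2) ^ (2 * j + (n + 2)) = P" and "F = real k * fact j * fact (j + (n + 2))"
      by (simp_all add: P_def F_def algebra_simps)
    then show ?thesis
      using Suc by (simp add: bessel_term_def)
  qed simp
  ultimately show ?thesis
    by (simp only:) (use F in \<open>simp add: field_simps\<close>)
qed

lemma besselI_recurrence:
  assumes "t \<noteq> 0"
  shows "besselI (int n) t = 2 * (real n + 1) / t * besselI (int (n + 1)) t + besselI (int (n + 2)) t"
proof -
  let ?c = "2 * (real n + 1) / t"
  let ?g = "\<lambda>k. case k of 0 \<Rightarrow> 0 | Suc j \<Rightarrow> bessel_term (n + 2) t j"
  have "(\<lambda>k. ?c * bessel_term (n + 1) t k) sums (?c * besselI (int (n + 1)) t)"
    unfolding besselI_of_nat by (intro sums_mult summable_sums summable_bessel_term)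
  moreover have "?g sums besselI (int (n + 2)) t"
  proof -
    have "(\<lambda>k. ?g (Suc k)) sums besselI (int (n + 2)) t"
      unfolding besselI_of_nat nat.case by (intro summable_sums summable_bessel_term)
    from sums_Suc_iff [THEN iffD1, OF this] show ?thesis
      by (simp only: nat.case add_0_right)
  qed
  ultimately have "(\<lambda>k. ?c * bessel_term (n + 1) t k + ?g k)
      sums (?c * besselI (int (n + 1)) t + besselI (int (n + 2)) t)"
    by (rule sums_add)
  then have "bessel_term n t sums (?c * besselI (int (n + 1)) t + besselI (int (n + 2)) t)"
    by (simp only: bessel_term_recurrence [OF assms, symmetric])
  then show ?thesis
    unfolding besselI_of_nat by (rule sums_unique [symmetric])
qed

lemma bessel_term_mult:
  assumes "i \<le> N"
  shows "bessel_term a t i * bessel_term b t (N - i)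
           = (t / 2) ^ (2 * N + a + b) / (fact N * fact (N + a + b))
             * real (N choose i) * real ((N + a + b) choose (i + a))"
proof -
  have "real (N choose i) = fact N / (fact i * fact (N - i))"
    using assms by (rule binomial_fact)
  moreover have "real ((N + a + b) choose (i + a)) = fact (N + a + b) / (fact (i + a) * fact (N - i + b))"
    using binomial_fact [of "i + a" "N + a + b"] assms by (simp add: algebra_simps)
  moreover have "(t / 2) ^ (2 * N + a + b) = (t / 2) ^ (2 * i + a) * (t / 2) ^ (2 * (N - i) + b)"
    using assms by (simp add: power_add [symmetric] algebra_simps)
  ultimately show ?thesis
    unfolding bessel_term_def by (simp only:) (simp add: field_simps)
qed

lemma sum_choose_mult_choose_shift:
  assumes "N + j \<le> P"
  shows "(\<Sum>i\<le>N. (N choose i) * (P choose (i + j))) = (N + P) choose (N + j)"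
proof -
  have "(\<Sum>i\<le>N. (N choose i) * (P choose (i + j))) = (\<Sum>i\<le>N. (N choose i) * (P choose (P - j - i)))"
    using assms by (intro sum.cong refl) (metis atMost_iff binomial_symmetric diff_diff_left
        add.commute add_le_mono le_trans order_refl)
  also have "\<dots> = (\<Sum>i\<le>P - j. (N choose i) * (P choose (P - j - i)))"
    using assms by (intro sum.mono_neutral_left) auto
  also have "\<dots> = (N + P) choose (P - j)"
    by (rule vandermonde)
  also have "\<dots> = (N + P) choose (N + j)"
    using assms by (subst binomial_symmetric) (auto simp: algebra_simps)
  finally show ?thesis .
qed

lemma bessel_Cauchy_coeff:
  "(\<Sum>i\<le>N. bessel_term a t i * bessel_term b t (N - i))
     = (t / 2) ^ (2 * N + a + b) / (fact N * fact (N + a + b)) * real ((2 * N + a + b) choose (N + a))"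
proof -
  let ?X = "(t / 2) ^ (2 * N + a + b) / (fact N * fact (N + a + b))"
  have "(\<Sum>i\<le>N. bessel_term a t i * bessel_term b t (N - i))
          = ?X * real (\<Sum>i\<le>N. (N choose i) * ((N + a + b) choose (i + a)))"
    by (simp add: bessel_term_mult sum_distrib_left mult.assoc)
  also have "(\<Sum>i\<le>N. (N choose i) * ((N + a + b) choose (i + a))) = (N + (N + a + b)) choose (N + a)"
    by (rule sum_choose_mult_choose_shift) simp
  also have "N + (N + a + b) = 2 * N + a + b"
    by simp
  finally show ?thesis .
qed

lemma besselI_Turan:
  "besselI (int n) t * besselI (int (n + 2)) t \<le> (besselI (int (n + 1)) t)\<^sup>2"
proof -
  have Cauchy: "(\<lambda>N. \<Sum>i\<le>N. bessel_term a t i * bessel_term b t (N - i))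
          sums (besselI (int a) t * besselI (int b) t)" for a b
    unfolding besselI_of_nat by (intro Cauchy_product_sums summable_norm_bessel_term)
  have coeff_le: "(\<Sum>i\<le>N. bessel_term n t i * bessel_term (n + 2) t (N - i))
                   \<le> (\<Sum>i\<le>N. bessel_term (n + 1) t i * bessel_term (n + 1) t (N - i))" for N
  proof -
    \<comment> \<open>Both coefficients carry the same prefactor; Vandermonde leaves the binomial
      coefficients \<open>(2m choose m - 1)\<close> and the central \<open>(2m choose m)\<close>.\<close>
    define m where "m = N + n + 1"
    have exponents: "2 * N + n + (n + 2) = 2 * m" "2 * N + (n + 1) + (n + 1) = 2 * m"
      "N + n + (n + 2) = N + (n + 1) + (n + 1)" "N + (n + 1) = m"
      by (simp_all add: m_def)
    have "(2 * m) choose (N + n) \<le> (2 * m) choose m"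
      by (rule binomial_maximum')
    moreover have "0 \<le> (t / 2) ^ (2 * m) / (fact N * fact (m + (n + 1)))"
      by (simp add: power_mult)
    ultimately show ?thesis
      unfolding bessel_Cauchy_coeff exponents by (rule mult_left_mono [OF of_nat_mono])
  qed
  show ?thesis
    unfolding power2_eq_square by (rule sums_le [OF coeff_le Cauchy Cauchy])
qed

lemma le_exp_mult_of_quadratic_le:
  fixes A B x :: real
  assumes "B > 0" "x \<ge> 0" "A * (A - 2 * x * B) \<le> B\<^sup>2"
  shows "A \<le> exp x * B"
proof -
  \<comment> \<open>\<open>A/B\<close> lies below the positive root \<open>x + sqrt (1 + x\<^sup>2)\<close> of \<open>r\<^sup>2 - 2xr = 1\<close>,
    and already the quadratic Taylor polynomial \<open>z\<close> of \<open>exp\<close> exceeds that root.\<close>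
  define z where "z = 1 + x + x\<^sup>2 / 2"
  have "A \<le> z * B"
  proof (rule ccontr)
    assume "\<not> A \<le> z * B"
    then have "z * B < A"
      by simp
    have "z - 2 * x = ((x - 1)\<^sup>2 + 1) / 2"
      by (simp add: z_def power2_eq_square field_simps)
    also have "\<dots> > 0"
      by (intro divide_pos_pos add_nonneg_pos) simp_all
    finally have "z - 2 * x > 0" .
    have "z > 0"
      using assms(2) by (simp add: z_def add_pos_nonneg)
    have "B\<^sup>2 + x ^ 4 / 4 * B\<^sup>2 = z * B * ((z - 2 * x) * B)"
      by (simp add: z_def power2_eq_square power4_eq_xxxx field_simps)
    also have "\<dots> < A * (A - 2 * x * B)"
    proof (rule mult_strict_mono)
      show "(z - 2 * x) * B < A - 2 * x * B"
        using \<open>z * B < A\<close> by (simp add: left_diff_distrib)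
      show "0 < A"
        using \<open>z * B < A\<close> mult_pos_pos [OF \<open>z > 0\<close> assms(1)] by linarith
      show "0 \<le> (z - 2 * x) * B"
        using \<open>z - 2 * x > 0\<close> assms(1) by simp
    qed fact
    also have "\<dots> \<le> B\<^sup>2"
      by (rule assms(3))
    finally have "x ^ 4 / 4 * B\<^sup>2 < 0"
      by simp
    moreover have "0 \<le> x ^ 4 / 4 * B\<^sup>2"
      by (simp add: zero_le_even_power)
    ultimately show False
      by simp
  qed
  also have "z * B \<le> exp x * B"
    using exp_lower_Taylor_quadratic [of x] assms(1,2) by (simp add: z_def)
  finally show ?thesis .
qed

lemma ln_besselI_diff_le:
  assumes "t > 0"
  shows "ln (besselI (int n) t) - ln (besselI (int (n + 1)) t) \<le> (real n + 1) / t"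
proof -
  define A B x where "A = besselI (int n) t" and "B = besselI (int (n + 1)) t"
    and "x = (real n + 1) / t"
  have "A > 0" "B > 0"
    using besselI_pos [OF assms] by (simp_all add: A_def B_def)
  have "A - 2 * x * B = besselI (int (n + 2)) t"
    using besselI_recurrence [of t n] assms by (simp add: A_def B_def x_def)
  then have "A * (A - 2 * x * B) \<le> B\<^sup>2"
    using besselI_Turan [of n t] by (simp add: A_def B_def)
  then have "A \<le> exp x * B"
    using \<open>B > 0\<close> assms by (intro le_exp_mult_of_quadratic_le) (simp_all add: x_def)
  then have "ln A \<le> ln (exp x * B)"
    using \<open>A > 0\<close> \<open>B > 0\<close> by simp
  also have "\<dots> = x + ln B"
    using \<open>B > 0\<close> by (simp add: ln_mult)
  finally show ?thesis
    by (simp add: A_def B_def x_def)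
qed

lemma ln_besselI_add_quadratic_mono:
  assumes "t > 0" and "\<bar>m\<bar> \<le> \<bar>m'\<bar>"
  shows "ln (besselI m t) + of_int (m\<^sup>2 + \<bar>m\<bar>) / (2 * t)
           \<le> ln (besselI m' t) + of_int (m'\<^sup>2 + \<bar>m'\<bar>) / (2 * t)"
proof -
  define h where "h k = ln (besselI (int k) t) + real k * (real k + 1) / (2 * t)" for k
  have h_step: "h k \<le> h (Suc k)" for k
  proof -
    have "real (k + 1) * (real (k + 1) + 1) / (2 * t) = real k * (real k + 1) / (2 * t) + (real k + 1) / t"
      using assms(1) by (simp add: field_simps)
    then show ?thesis
      unfolding h_def Suc_eq_plus1 using ln_besselI_diff_le [OF assms(1), of k] by linarith
  qed
  have "nat \<bar>m\<bar> \<le> nat \<bar>m'\<bar>"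
    using assms(2) by simp
  with h_step have "h (nat \<bar>m\<bar>) \<le> h (nat \<bar>m'\<bar>)"
    by (rule lift_Suc_mono_le)
  moreover have "h (nat \<bar>k\<bar>) = ln (besselI k t) + of_int (k\<^sup>2 + \<bar>k\<bar>) / (2 * t)" for k
  proof -
    have "real (nat \<bar>k\<bar>) * (real (nat \<bar>k\<bar>) + 1) = of_int (k\<^sup>2 + \<bar>k\<bar>)"
      by (simp add: power2_eq_square algebra_simps abs_mult_self_eq)
    then show ?thesis
      by (simp only: h_def besselI_nat_abs)
  qed
  ultimately show ?thesis
    by (simp only:)
qed

lemma sum_symmetric_window_Suc:
  fixes g :: "int \<Rightarrow> 'a::comm_monoid_add"
  shows "(\<Sum>m\<in>{-int (Suc N)..int (Suc N)}. g m)
           = (\<Sum>m\<in>{-int N..int N}. g m) + g (int N + 1) + g (- int N - 1)"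
proof -
  have "{-int (Suc N)..int (Suc N)} = insert (int N + 1) (insert (- int N - 1) {-int N..int N})"
    by auto
  then show ?thesis
    by (simp add: ac_simps)
qed

lemma sum_symmetric_window_shift:
  fixes g :: "int \<Rightarrow> 'a::ab_group_add"
  shows "(\<Sum>m\<in>{-int n..int n}. g (m - 1))
           = (\<Sum>m\<in>{-int n..int n}. g m) + g (- int n - 1) - g (int n)"
proof -
  have "(\<Sum>m\<in>{-int n..int n}. g (m - 1)) = (\<Sum>m\<in>{-int n - 1..int n - 1}. g m)"
    using sum.reindex [of "\<lambda>m. m - 1" "{-int n..int n}" g] by (simp add: inj_on_def)
  moreover have "{-int n - 1..int n - 1} = insert (- int n - 1) {-int n..int n - 1}"
    and "{-int n..int n} = insert (int n) {-int n..int n - 1}"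
    by auto
  ultimately show ?thesis
    by (simp add: algebra_simps)
qed

lemma sum_symmetric_window_le_shifted:
  fixes G :: "int \<Rightarrow> real"
  assumes "\<And>m m'. \<bar>m\<bar> \<le> \<bar>m'\<bar> \<Longrightarrow> G m \<le> G m'"
  shows "(\<Sum>m\<in>{-int n..int n}. G m) \<le> (\<Sum>m\<in>{-int n..int n}. G (m - int d))"
proof (induction d)
  case (Suc d)
  have "G (int n - int d) \<le> G (- int n - 1 - int d)"
    by (intro assms) simp
  then show ?case
    using Suc.IH sum_symmetric_window_shift [of "\<lambda>m. G (m - int d)" n]
    by (simp add: algebra_simps)
qed simp

lemma sum_symmetric_window_id: "(\<Sum>m\<in>{-int n..int n}. m) = 0"
proof -
  have "(\<Sum>m\<in>{-int n..int n}. m) = (\<Sum>m\<in>{-int n..int n}. - m)"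
    using sum.reindex [of uminus "{-int n..int n}" "\<lambda>m. m"] by simp
  then show ?thesis
    by (simp add: sum_negf)
qed

lemma sum_symmetric_window_quadratic_shift_le:
  "(\<Sum>m\<in>{-int n..int n}. ((m - int d)\<^sup>2 + \<bar>m - int d\<bar>) - (m\<^sup>2 + \<bar>m\<bar>))
     \<le> (2 * int n + 1) * (int d + (int d)\<^sup>2)"
proof -
  have "(\<Sum>m\<in>{-int n..int n}. ((m - int d)\<^sup>2 + \<bar>m - int d\<bar>) - (m\<^sup>2 + \<bar>m\<bar>))
          \<le> (\<Sum>m\<in>{-int n..int n}. (int d + (int d)\<^sup>2) - 2 * int d * m)"
    by (intro sum_mono) (simp add: power2_eq_square algebra_simps abs_triangle_ineq4)
  also have "\<dots> = (2 * int n + 1) * (int d + (int d)\<^sup>2)"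
    by (simp add: sum_subtractf sum_distrib_left [symmetric] sum_symmetric_window_id)
  finally show ?thesis .
qed

lemma sum_symmetric_window_ln_besselI_ratio_le:
  assumes "t > 0"
  shows "(\<Sum>m\<in>{-int n..int n}. ln (besselI m t / besselI (m - int d) t))
           \<le> (2 * real n + 1) * ((real d + (real d)\<^sup>2) / (2 * t))"
proof -
  define q where "q m = of_int (m\<^sup>2 + \<bar>m\<bar>) / (2 * t)" for m
  define G where "G m = ln (besselI m t) + q m" for m
  have "ln (besselI m t / besselI (m - int d) t) = (G m - G (m - int d)) + (q (m - int d) - q m)" for m
    using besselI_pos [OF assms, of m] besselI_pos [OF assms, of "m - int d"]
    by (simp add: G_def ln_div)
  then have "(\<Sum>m\<in>{-int n..int n}. ln (besselI m t / besselI (m - int d) t))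
      = ((\<Sum>m\<in>{-int n..int n}. G m) - (\<Sum>m\<in>{-int n..int n}. G (m - int d)))
        + (\<Sum>m\<in>{-int n..int n}. q (m - int d) - q m)"
    by (simp add: sum.distrib sum_subtractf)
  also have "(\<Sum>m\<in>{-int n..int n}. G m) - (\<Sum>m\<in>{-int n..int n}. G (m - int d)) \<le> 0"
    using sum_symmetric_window_le_shifted [of G n d] ln_besselI_add_quadratic_mono [OF assms]
    by (simp add: G_def q_def)
  also have "(\<Sum>m\<in>{-int n..int n}. q (m - int d) - q m)
      = of_int (\<Sum>m\<in>{-int n..int n}. ((m - int d)\<^sup>2 + \<bar>m - int d\<bar>) - (m\<^sup>2 + \<bar>m\<bar>))
          / (2 * t)"
    by (simp add: q_def sum_divide_distrib diff_divide_distrib)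
  also have "\<dots> \<le> of_int ((2 * int n + 1) * (int d + (int d)\<^sup>2)) / (2 * t)"
    using assms by (intro divide_right_mono of_int_le_iff [THEN iffD2]
        sum_symmetric_window_quadratic_shift_le) simp
  finally show ?thesis
    by simp
qed

lemma sum_symmetric_window_weighted_le:
  fixes p F :: "int \<Rightarrow> real"
  assumes p_nonneg: "\<And>m. 0 \<le> p m"
    and p_unimodal: "\<And>m m'. \<bar>m\<bar> \<le> \<bar>m'\<bar> \<Longrightarrow> p m' \<le> p m"
    and F_windows: "\<And>n. (\<Sum>m\<in>{-int n..int n}. F m) \<le> (2 * real n + 1) * B"
  shows "(\<Sum>m\<in>{-int N..int N}. p m * F m) \<le> B * (\<Sum>m\<in>{-int N..int N}. p m)"
proof -
  define W where "W n = (2 * real n + 1) * B - (\<Sum>m\<in>{-int n..int n}. F m)" for n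
  have W_nonneg: "0 \<le> W n" for n
    using F_windows [of n] by (simp add: W_def)
  have Abel: "p (int N) * W N
      \<le> B * (\<Sum>m\<in>{-int N..int N}. p m) - (\<Sum>m\<in>{-int N..int N}. p m * F m)"
  proof (induction N)
    case 0
    show ?case
      by (simp add: W_def algebra_simps)
  next
    case (Suc N)
    have p_sym: "p (- int N - 1) = p (int N + 1)"
      by (intro order.antisym p_unimodal) simp_all
    have "p (int N + 1) \<le> p (int N)"
      by (rule p_unimodal) simp
    then have "p (int N + 1) * W N \<le> p (int N) * W N"
      using W_nonneg by (rule mult_right_mono)
    moreover have "p (int (Suc N)) * W (Suc N)
        = p (int N + 1) * W N + p (int N + 1) * (2 * B - F (int N + 1) - F (- int N - 1))"
      by (simp only: W_def sum_symmetric_window_Suc) (simp add: algebra_simps)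
    moreover have "(\<Sum>m\<in>{-int (Suc N)..int (Suc N)}. p m)
        = (\<Sum>m\<in>{-int N..int N}. p m) + 2 * p (int N + 1)"
      by (simp only: sum_symmetric_window_Suc p_sym)
    moreover have "(\<Sum>m\<in>{-int (Suc N)..int (Suc N)}. p m * F m)
        = (\<Sum>m\<in>{-int N..int N}. p m * F m) + p (int N + 1) * (F (int N + 1) + F (- int N - 1))"
      by (simp only: sum_symmetric_window_Suc p_sym) (simp add: algebra_simps)
    ultimately show ?case
      using Suc.IH by (simp add: algebra_simps)
  qed
  moreover have "0 \<le> p (int N) * W N"
    using p_nonneg W_nonneg by (rule mult_nonneg_nonneg)
  ultimately show ?thesis
    by linarith
qed

lemma expectation_le_of_window_sums_le:
  fixes M :: "int pmf" and f :: "int \<Rightarrow> real"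
  assumes "0 \<le> B" and windows: "\<And>N. (\<Sum>m\<in>{-int N..int N}. pmf M m * f m) \<le> B"
  shows "measure_pmf.expectation M f \<le> B"
proof (cases "integrable M f")
  case True
  define f_N where "f_N N m = f m * indicator {-int N..int N} m" for N m
  have "(\<lambda>N. measure_pmf.expectation M (f_N N)) \<longlonglongrightarrow> measure_pmf.expectation M f"
  proof (rule integral_dominated_convergence [where w = "\<lambda>m. norm (f m)"])
    show "AE m in M. (\<lambda>N. f_N N m) \<longlonglongrightarrow> f m"
    proof (rule AE_I2, rule tendsto_eventually)
      show "\<forall>\<^sub>F N in sequentially. f_N N m = f m" for m
        unfolding eventually_sequentially f_N_def
        by (auto intro!: exI [of _ "nat \<bar>m\<bar>"] simp: indicator_def)
    qed
  qed (use True in \<open>auto simp: f_N_def indicator_def\<close>)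
  moreover have "measure_pmf.expectation M (f_N N) = (\<Sum>m\<in>{-int N..int N}. pmf M m * f m)" for N
    by (subst integral_measure_pmf_real [where A = "{-int N..int N}"])
      (auto simp: f_N_def indicator_def mult.commute intro!: sum.cong)
  ultimately show ?thesis
    using windows by (intro LIMSEQ_le_const2) auto
next
  case False
  \<comment> \<open>The Bochner integral of a non-integrable function is \<open>0\<close>, whence \<open>0 \<le> B\<close>.\<close>
  then show ?thesis
    using assms(1) by (simp add: not_integrable_integral_eq)
qed

theorem mainTheorem3:
  fixes d :: nat and t :: real and M :: "int pmf"
  assumes "t > 0"
    and "symmetric_pmf M"
    and "unimodal_sym_pmf M"
  shows "measure_pmf.expectation M (\<lambda>m. ln (besselI m t / besselI (m - int d) t))
           \<le> (real d + (real d)\<^sup>2) / (2 * t)"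
proof -
  define B where "B = (real d + (real d)\<^sup>2) / (2 * t)"
  have "0 \<le> B"
    using assms(1) by (simp add: B_def)
  \<comment> \<open>unimodal_sym_pmf already forces symmetry (take m' = -m).\<close>
  have unimodal: "\<And>m m'. \<bar>m\<bar> \<le> \<bar>m'\<bar> \<Longrightarrow> pmf M m' \<le> pmf M m"
    using assms(3) by (simp add: unimodal_sym_pmf_def)
  have windows: "(\<Sum>m\<in>{-int n..int n}. ln (besselI m t / besselI (m - int d) t))
      \<le> (2 * real n + 1) * B" for n
    unfolding B_def by (rule sum_symmetric_window_ln_besselI_ratio_le [OF assms(1)])
  have "(\<Sum>m\<in>{-int N..int N}. pmf M m * ln (besselI m t / besselI (m - int d) t)) \<le> B" for N
  proof -
    have "(\<Sum>m\<in>{-int N..int N}. pmf M m) \<le> 1"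
      using measure_pmf.prob_le_1 [of M "{-int N..int N}"] by (simp add: measure_measure_pmf_finite)
    moreover have "(\<Sum>m\<in>{-int N..int N}. pmf M m * ln (besselI m t / besselI (m - int d) t))
        \<le> B * (\<Sum>m\<in>{-int N..int N}. pmf M m)"
      using pmf_nonneg unimodal windows by (rule sum_symmetric_window_weighted_le)
    ultimately show ?thesis
      using \<open>0 \<le> B\<close> by (meson mult_left_le order_trans)
  qed
  with \<open>0 \<le> B\<close> show ?thesis
    unfolding B_def by (rule expectation_le_of_window_sums_le)
qed

end
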